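(* Let $X$ be a uniformly convex and uniformly smooth Banach space, $D_0$ a dislocation group on $X$ and $D\subset D_0$. Let $(u_k)\subset X$ be bounded and suppose there are sequences $(g_k^{(1)}),(g_k^{(2)})\subset D$ and elements $w^{(1)},w^{(2)}\in X$ with $(g_k^{(1)})^{-1}u_k\rightharpoondown w^{(1)}$ and $(g_k^{(2)})^{-1}(u_k-g_k^{(1)}w^{(1)})\rightharpoondown w^{(2)}\ne0$. Then $(g_k^{(1)})^{-1}g_k^{(2)}\rightharpoonup0$.
   Context: Δ-convergence: $x_k\rightharpoondown x$ if for every $y\in X$, $\limsup_k(\|x_k-x\|-\|x_k-y\|)\le0$. Operator convergence $g_k\rightharpoonup g$: $g_kx\rightharpoonup gx$ weakly for all $x$; strong convergence: $g_kx\to gx$ in norm for all $x$. A group $D_0$ of bijective linear isometries of $X$ is a dislocation group if: $(\ast)$ whenever $(g_k)\subset D_0$ and $g_k\not\rightharpoonup0$, some subsequence has both $(g_{k_j})$ and $(g_{k_j}^{-1})$ strongly convergent; and $(\ast\ast)$ whenever $u_k\rightharpoondown0$, $w\in X$, $(g_k)\subset D_0$, $g_k\rightharpoonup0$, then $u_k+g_kw\rightharpoondown0$. *)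

theory Defs
  imports "HOL-Analysis.Analysis" "HOL-Library.Liminf_Limsup"
begin

definition uniformly_convex :: "'a::real_normed_vector itself \<Rightarrow> bool" where
  "uniformly_convex _ \<longleftrightarrow>
     (\<forall>e>0. \<exists>d>0. \<forall>x y::'a. norm x \<le> 1 \<longrightarrow> norm y \<le> 1 \<longrightarrow> norm (x - y) \<ge> e
        \<longrightarrow> norm ((1/2) *\<^sub>R (x + y)) \<le> 1 - d)"

definition modulus_of_smoothness :: "'a::real_normed_vector itself \<Rightarrow> real \<Rightarrow> real" where
  "modulus_of_smoothness _ t =
     (SUP p \<in> {(x::'a, y::'a). norm x = 1 \<and> norm y = 1}.
        (norm (fst p + t *\<^sub>R snd p) + norm (fst p - t *\<^sub>R snd p)) / 2 - 1)"

definition uniformly_smooth :: "'a::real_normed_vector itself \<Rightarrow> bool" where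
  "uniformly_smooth T \<longleftrightarrow>
     ((\<lambda>t. modulus_of_smoothness T t / t) \<longlongrightarrow> 0) (at_right 0)"

definition weak_conv :: "(nat \<Rightarrow> 'a::real_normed_vector) \<Rightarrow> 'a \<Rightarrow> bool" where
  "weak_conv x l \<longleftrightarrow> (\<forall>f::'a \<Rightarrow>\<^sub>L real. (\<lambda>k. f (x k)) \<longlonglongrightarrow> f l)"

definition delta_conv :: "(nat \<Rightarrow> 'a::real_normed_vector) \<Rightarrow> 'a \<Rightarrow> bool" where
  "delta_conv x l \<longleftrightarrow>
     (\<forall>y. limsup (\<lambda>k. ereal (norm (x k - l) - norm (x k - y))) \<le> 0)"

definition op_weak_conv :: "(nat \<Rightarrow> 'a \<Rightarrow> 'a::real_normed_vector) \<Rightarrow> ('a \<Rightarrow> 'a) \<Rightarrow> bool" where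
  "op_weak_conv g h \<longleftrightarrow> (\<forall>x. weak_conv (\<lambda>k. g k x) (h x))"

definition op_strong_conv :: "(nat \<Rightarrow> 'a \<Rightarrow> 'a::real_normed_vector) \<Rightarrow> ('a \<Rightarrow> 'a) \<Rightarrow> bool" where
  "op_strong_conv g h \<longleftrightarrow> (\<forall>x. (\<lambda>k. g k x) \<longlonglongrightarrow> h x)"

definition dislocation_group :: "('a::real_normed_vector \<Rightarrow> 'a) set \<Rightarrow> bool" where
  "dislocation_group D0 \<longleftrightarrow>
     (\<forall>g\<in>D0. linear g \<and> bij g \<and> (\<forall>x. norm (g x) = norm x)) \<and>
     id \<in> D0 \<and> (\<forall>g\<in>D0. \<forall>h\<in>D0. g \<circ> h \<in> D0) \<and> (\<forall>g\<in>D0. inv g \<in> D0) \<and>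
     (\<forall>g. (\<forall>k. g k \<in> D0) \<and> \<not> op_weak_conv g (\<lambda>_. 0) \<longrightarrow>
        (\<exists>r. strict_mono r \<and> (\<exists>h. op_strong_conv (g \<circ> r) h)
                             \<and> (\<exists>h. op_strong_conv (\<lambda>j. inv (g (r j))) h))) \<and>
     (\<forall>u w g. delta_conv u 0 \<and> (\<forall>k. g k \<in> D0) \<and> op_weak_conv g (\<lambda>_. 0) \<longrightarrow>
        delta_conv (\<lambda>k. u k + g k w) 0)"

end

theory Submission
  imports Defs
begin

text \<open>Put \<open>x k = g2 k\<^sup>-\<^sup>1 (u k - g1 k w1)\<close>, \<open>z k = g1 k\<^sup>-\<^sup>1 (u k)\<close> and
  \<open>h k = g1 k\<^sup>-\<^sup>1 \<circ> g2 k\<close>. As all operators are linear isometries,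
  \<open>\<parallel>x k\<parallel> - \<parallel>x k - y\<parallel> = \<parallel>z k - w1\<parallel> - \<parallel>z k - w1 - h k y\<parallel>\<close>.
  If \<open>h\<close> were not weakly null, a subsequence would converge strongly to some \<open>H\<close>, and the
  \<open>\<Delta>\<close>-convergence of \<open>z\<close> to \<open>w1\<close> would make the right-hand side eventually arbitrarily
  small along it, for \<open>y = w2/2\<close>. But uniform convexity keeps a bounded sequence
  \<open>\<Delta>\<close>-converging to \<open>w2 \<noteq> 0\<close> eventually closer to \<open>w2/2\<close> than to \<open>0\<close> by a fixed margin.\<close>

lemma delta_conv_eventually_less:
  assumes "delta_conv x l" "e > 0"
  shows "eventually (\<lambda>k. norm (x k - l) - norm (x k - y) < e) sequentially"
proof -
  have "limsup (\<lambda>k. ereal (norm (x k - l) - norm (x k - y))) < ereal e"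
    using assms by (auto simp: delta_conv_def intro: le_less_trans)
  from Limsup_lessD[OF this] show ?thesis by simp
qed

lemma delta_conv_subseq:
  assumes "delta_conv x l" "strict_mono r"
  shows "delta_conv (x \<circ> r) l"
  unfolding delta_conv_def
proof
  fix y
  have "limsup ((\<lambda>k. ereal (norm (x k - l) - norm (x k - y))) \<circ> r)
          \<le> limsup (\<lambda>k. ereal (norm (x k - l) - norm (x k - y)))"
    using assms(2) by (rule limsup_subseq_mono)
  also have "\<dots> \<le> 0" using assms(1) by (simp add: delta_conv_def)
  finally show "limsup (\<lambda>k. ereal (norm ((x \<circ> r) k - l) - norm ((x \<circ> r) k - y))) \<le> 0"
    by (simp add: o_def)
qed

lemma delta_conv_eventually_less_tendsto:
  assumes "delta_conv x l" "v \<longlonglongrightarrow> v0" "e > 0"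
  shows "eventually (\<lambda>k. norm (x k - l) - norm (x k - (l + v k)) < e) sequentially"
  using delta_conv_eventually_less[OF assms(1) half_gt_zero[OF assms(3)], of "l + v0"]
    tendstoD[OF assms(2) half_gt_zero[OF assms(3)]]
proof eventually_elim
  case (elim k)
  have "norm (x k - (l + v0)) \<le> norm (x k - (l + v k)) + norm (v k - v0)"
    using norm_triangle_ineq[of "x k - (l + v k)" "v k - v0"] by (simp add: algebra_simps)
  with elim show ?case by (simp add: dist_norm)
qed

text \<open>If \<open>x\<close> and \<open>x - w\<close> lie in a ball of radius \<open>M\<close>, their midpoint \<open>x - w/2\<close> lies in
  the ball of radius \<open>(1 - \<delta>) M\<close>, with \<open>\<delta>\<close> from the modulus of convexity at \<open>\<parallel>w\<parallel>/M\<close>.\<close>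
lemma uniformly_convex_midpoint_gap:
  fixes w :: "'a::real_normed_vector"
  assumes uc: "uniformly_convex TYPE('a)" and w: "w \<noteq> 0"
  shows "\<exists>c>0. \<forall>x::'a. norm x \<le> B \<longrightarrow>
     c \<le> max (norm x - norm (x - (1/2) *\<^sub>R w)) (norm (x - w) - norm (x - (1/2) *\<^sub>R w))"
proof -
  define R where "R = max B 0 + norm w"
  have nw: "norm w > 0" using w by simp
  have R: "R > 0" unfolding R_def using nw max.cobounded2[of 0 B] by linarith
  define e where "e = norm w / R"
  have e: "e > 0" unfolding e_def using nw R by simp
  from uc[unfolded uniformly_convex_def, rule_format, OF e] obtain d where d: "d > 0"
    and modulus: "\<And>x y::'a. norm x \<le> 1 \<Longrightarrow> norm y \<le> 1 \<Longrightarrow> norm (x - y) \<ge> e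
        \<Longrightarrow> norm ((1/2) *\<^sub>R (x + y)) \<le> 1 - d" by blast
  define c where "c = d * norm w / 2"
  have c: "c > 0" unfolding c_def using d nw by simp
  show ?thesis
  proof (intro exI[of _ c] conjI allI impI c)
    fix x :: 'a assume xB: "norm x \<le> B"
    define M where "M = max (norm x) (norm (x - w))"
    have "norm w \<le> norm x + norm (x - w)" using norm_triangle_ineq4[of x "x - w"] by simp
    hence Mw: "M \<ge> norm w / 2" unfolding M_def by linarith
    have MR: "M \<le> R"
      unfolding M_def R_def max.bounded_iff
      using xB norm_triangle_ineq4[of x w] max.cobounded1[of B 0] norm_ge_zero[of w] by linarith
    have M0: "M > 0" using Mw nw by linarith
    define a where "a = (1/M) *\<^sub>R x"
    define b where "b = (1/M) *\<^sub>R (x - w)"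
    have na: "norm a \<le> 1" and nb: "norm b \<le> 1"
      unfolding a_def b_def using M0 by (simp_all add: M_def divide_le_eq_1)
    have "norm (a - b) = norm w / M"
      unfolding a_def b_def using M0 by (simp add: algebra_simps flip: scaleR_diff_right)
    moreover have "norm w / R \<le> norm w / M" using MR M0 nw by (simp add: frac_le)
    ultimately have "norm (a - b) \<ge> e" unfolding e_def by simp
    from modulus[OF na nb this] have "norm ((1/2) *\<^sub>R (a + b)) \<le> 1 - d" .
    moreover have "(1/2) *\<^sub>R (a + b) = (1/M) *\<^sub>R (x - (1/2) *\<^sub>R w)"
      unfolding a_def b_def by (simp add: algebra_simps flip: scaleR_add_left)
    ultimately have "norm (x - (1/2) *\<^sub>R w) / M \<le> 1 - d"
      using M0 by simp
    then have "norm (x - (1/2) *\<^sub>R w) \<le> (1 - d) * M"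
      using M0 by (simp only: pos_divide_le_eq)
    then have "norm (x - (1/2) *\<^sub>R w) \<le> M - M * d"
      by (simp add: algebra_simps)
    moreover have "M * d \<ge> c" unfolding c_def using Mw d by (simp add: mult_right_mono)
    ultimately show "c \<le> max (norm x - norm (x - (1/2) *\<^sub>R w))
                               (norm (x - w) - norm (x - (1/2) *\<^sub>R w))"
      unfolding M_def by linarith
  qed
qed

lemma delta_conv_nonzero_midpoint_gap:
  fixes x :: "nat \<Rightarrow> 'a::real_normed_vector"
  assumes "uniformly_convex TYPE('a)" "delta_conv x w" "w \<noteq> 0" "bounded (range x)"
  shows "\<exists>c>0. eventually (\<lambda>k. c \<le> norm (x k) - norm (x k - (1/2) *\<^sub>R w)) sequentially"
proof -
  obtain B where "\<And>k. norm (x k) \<le> B" using assms(4) by (auto simp: bounded_iff)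
  moreover obtain c where c: "c > 0" and gap: "\<And>v::'a. norm v \<le> B \<Longrightarrow>
      c \<le> max (norm v - norm (v - (1/2) *\<^sub>R w)) (norm (v - w) - norm (v - (1/2) *\<^sub>R w))"
    using uniformly_convex_midpoint_gap[OF assms(1,3)] by blast
  ultimately have "eventually (\<lambda>k. c \<le> norm (x k) - norm (x k - (1/2) *\<^sub>R w)) sequentially"
    using delta_conv_eventually_less[OF assms(2) c, of "(1/2) *\<^sub>R w"]
    by (elim eventually_mono) (metis le_max_iff_disj linorder_not_le)
  with c show ?thesis by blast
qed

definition linear_isometry :: "('a::real_normed_vector \<Rightarrow> 'a) \<Rightarrow> bool" where
  "linear_isometry g \<longleftrightarrow> linear g \<and> bij g \<and> (\<forall>x. norm (g x) = norm x)"

lemma linear_inv_of_bij: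
  fixes g :: "'a::real_vector \<Rightarrow> 'a"
  assumes "linear g" "bij g"
  shows "linear (inv g)"
proof (rule linearI)
  have g_inv: "g (inv g v) = v" and inv_g: "inv g (g v) = v" for v
    using assms(2) by (simp_all add: bij_is_surj surj_f_inv_f bij_is_inj)
  show "inv g (a + b) = inv g a + inv g b" for a b
    using inv_g[of "inv g a + inv g b"] by (simp add: linear_add[OF assms(1)] g_inv)
  show "inv g (r *\<^sub>R a) = r *\<^sub>R inv g a" for r a
    using inv_g[of "r *\<^sub>R inv g a"] by (simp add: linear_scale[OF assms(1)] g_inv)
qed

lemma linear_isometry_inv:
  assumes "linear_isometry g"
  shows "linear_isometry (inv g)"
proof -
  have "norm (inv g x) = norm x" for x
    using assms by (metis linear_isometry_def bij_inv_eq_iff)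
  then show ?thesis
    using assms by (simp add: linear_isometry_def bij_imp_bij_inv linear_inv_of_bij)
qed

lemma linear_isometry_norm_diff_transfer:
  assumes g1: "linear_isometry g1" and g2: "linear_isometry g2"
  shows "norm (inv g2 (u - g1 w)) - norm (inv g2 (u - g1 w) - y)
       = norm (inv g1 u - w) - norm (inv g1 u - (w + (inv g1 \<circ> g2) y))"
proof -
  have l1: "linear g1" and b1: "bij g1" and l2: "linear (inv g2)" and b2: "bij g2"
    using g1 g2 linear_isometry_inv[OF g2] by (auto simp: linear_isometry_def)
  have n: "norm (inv g2 (g1 v)) = norm v" for v
    using g1 linear_isometry_inv[OF g2] by (simp add: linear_isometry_def)
  have u: "u - g1 w = g1 (inv g1 u - w)"
    using l1 b1 by (simp add: linear_diff bij_is_surj surj_f_inv_f)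
  have "g1 (inv g1 u - (w + (inv g1 \<circ> g2) y)) = u - g1 w - g2 y"
    using l1 b1 by (simp add: linear_diff linear_add bij_is_surj surj_f_inv_f)
  moreover have "inv g2 (u - g1 w) - y = inv g2 (u - g1 w - g2 y)"
    using l2 b2 by (simp add: linear_diff bij_is_inj)
  ultimately have "inv g2 (u - g1 w) - y = inv g2 (g1 (inv g1 u - (w + (inv g1 \<circ> g2) y)))"
    by simp
  then show ?thesis by (simp add: u n)
qed

lemma bounded_range_linear_isometry_shift:
  assumes "bounded (range u)" "\<And>k. linear_isometry (f k)" "\<And>k. linear_isometry (g k)"
  shows "bounded (range (\<lambda>k. f k (u k - g k w)))"
proof -
  obtain B where B: "\<And>k. norm (u k) \<le> B" using assms(1) by (auto simp: bounded_iff)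
  have "norm (f k (u k - g k w)) \<le> B + norm w" for k
    using B[of k] norm_triangle_ineq4[of "u k" "g k w"] assms(2,3)[of k]
    by (simp add: linear_isometry_def)
  then show ?thesis by (auto simp: bounded_iff)
qed

lemma dislocation_group_linear_isometry:
  "dislocation_group D0 \<Longrightarrow> g \<in> D0 \<Longrightarrow> linear_isometry g"
  by (simp add: dislocation_group_def linear_isometry_def)

lemma dislocation_group_inv_comp:
  "dislocation_group D0 \<Longrightarrow> g \<in> D0 \<Longrightarrow> h \<in> D0 \<Longrightarrow> inv g \<circ> h \<in> D0"
  by (simp add: dislocation_group_def)

lemma dislocation_group_strong_subseq:
  assumes "dislocation_group D0" "\<And>k. g k \<in> D0" "\<not> op_weak_conv g (\<lambda>_. 0)"
  obtains r H where "strict_mono r" "op_strong_conv (g \<circ> r) H"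
  using assms unfolding dislocation_group_def by blast

theorem lemma5p8:
  fixes D0 D :: "('a::banach \<Rightarrow> 'a) set"
    and u :: "nat \<Rightarrow> 'a" and g1 g2 :: "nat \<Rightarrow> 'a \<Rightarrow> 'a" and w1 w2 :: 'a
  assumes "uniformly_convex TYPE('a)" and "uniformly_smooth TYPE('a)"
    and "dislocation_group D0" and "D \<subseteq> D0"
    and "bounded (range u)"
    and "\<And>k. g1 k \<in> D" and "\<And>k. g2 k \<in> D"
    and "delta_conv (\<lambda>k. inv (g1 k) (u k)) w1"
    and "delta_conv (\<lambda>k. inv (g2 k) (u k - g1 k w1)) w2"
    and "w2 \<noteq> 0"
  shows "op_weak_conv (\<lambda>k. inv (g1 k) \<circ> g2 k) (\<lambda>_. 0)"
proof (rule ccontr)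
  define x where "x = (\<lambda>k. inv (g2 k) (u k - g1 k w1))"
  define z where "z = (\<lambda>k. inv (g1 k) (u k))"
  define y where "y = (1/2) *\<^sub>R w2"
  have iso1: "linear_isometry (g1 k)" and iso2: "linear_isometry (g2 k)" for k
    using dislocation_group_linear_isometry[OF assms(3)] assms(4,6,7) by blast+
  have transfer: "norm (x k) - norm (x k - y)
      = norm (z k - w1) - norm (z k - (w1 + (inv (g1 k) \<circ> g2 k) y))" for k
    unfolding x_def z_def by (rule linear_isometry_norm_diff_transfer[OF iso1 iso2])
  have "inv (g1 k) \<circ> g2 k \<in> D0" for k
    using dislocation_group_inv_comp[OF assms(3)] assms(4,6,7) by blast
  moreover assume "\<not> op_weak_conv (\<lambda>k. inv (g1 k) \<circ> g2 k) (\<lambda>_. 0)"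
  ultimately obtain r H where r: "strict_mono r"
    and H: "op_strong_conv ((\<lambda>k. inv (g1 k) \<circ> g2 k) \<circ> r) H"
    by (rule dislocation_group_strong_subseq[OF assms(3)])
  have "bounded (range x)"
    unfolding x_def using assms(5) linear_isometry_inv[OF iso2] iso1
    by (rule bounded_range_linear_isometry_shift)
  then obtain c where c: "c > 0"
    and gap: "eventually (\<lambda>k. c \<le> norm (x k) - norm (x k - y)) sequentially"
    using delta_conv_nonzero_midpoint_gap[OF assms(1) assms(9)[folded x_def] assms(10)]
    unfolding y_def by blast
  have "(\<lambda>j. (inv (g1 (r j)) \<circ> g2 (r j)) y) \<longlonglongrightarrow> H y"
    using H by (simp add: op_strong_conv_def)
  from delta_conv_eventually_less_tendsto[OF delta_conv_subseq[OF assms(8)[folded z_def] r] this c]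
  have "eventually (\<lambda>j. norm (z (r j) - w1)
      - norm (z (r j) - (w1 + (inv (g1 (r j)) \<circ> g2 (r j)) y)) < c) sequentially"
    by simp
  with eventually_subseq[OF r gap] have "eventually (\<lambda>j. False) sequentially"
    by eventually_elim (simp add: transfer)
  then show False by simp
qed

end
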